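(* Let $S\subset\mathbb{Z}_{>0}^3$ be the union, up to permutation of coordinates, of the following sets: (1) the set $\mathcal{A}$ of all well-formed triples $(a,b,c)$ for which $\mathbb{P}(a,b,c)$ contains a Du Val singularity or a smooth torus-invariant point; (2) $\mathcal{B}_1=\{(1+4\ell(n-1),\,2n-1+4k(n-1),\,4n-4): n\geq2,\ 0\leq\ell,k<n-1\}$; (3) $\mathcal{B}_2=\{(1+\ell(6n-5),\,3n-1+k(6n-5),\,6n-5): n\geq2,\ 0\leq\ell,k<\lceil\frac{4(6n-5)}{9}\rceil\}$; (4) $\mathcal{B}_3=\{(1+\ell(6n-7),\,3n-2+k(6n-7),\,6n-7): n\geq2,\ 0\leq\ell,k<\lceil\frac{4(6n-7)}{9}\rceil\}$. Then $S$ has density zero in $\mathbb{Z}_{>0}^3$, i.e. $\lim_{N\to\infty}\#(S\cap[1,N]^3)/N^3=0$.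
   Context: A triple $(a,b,c)$ is well-formed if its entries are pairwise coprime. The torus-invariant points of $\mathbb{P}(a,b,c)$ are the cyclic quotient points $\frac1a(b,c)$, $\frac1b(a,c)$, $\frac1c(a,b)$. *)

theory Defs
  imports Complex_Main
begin

definition well_formed :: "nat \<times> nat \<times> nat \<Rightarrow> bool" where
  "well_formed t = (case t of (a, b, c) \<Rightarrow>
      0 < a \<and> 0 < b \<and> 0 < c \<and> coprime a b \<and> coprime a c \<and> coprime b c)"

text \<open>The cyclic quotient surface point 1/r(a,b) (with r coprime to a and b) is smooth iff r = 1,
  and is a Du Val singularity (necessarily of type A_{r-1}) iff r \<ge> 2 and r divides a + b.\<close>

definition cq_smooth :: "nat \<Rightarrow> nat \<Rightarrow> nat \<Rightarrow> bool" where
  "cq_smooth r a b = (r = 1)"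

definition cq_DuVal :: "nat \<Rightarrow> nat \<Rightarrow> nat \<Rightarrow> bool" where
  "cq_DuVal r a b = (2 \<le> r \<and> r dvd (a + b))"

text \<open>Torus-invariant points of P(a,b,c): 1/a(b,c), 1/b(a,c), 1/c(a,b).\<close>

definition has_DuVal_or_smooth_point :: "nat \<times> nat \<times> nat \<Rightarrow> bool" where
  "has_DuVal_or_smooth_point t = (case t of (a, b, c) \<Rightarrow>
      cq_DuVal a b c \<or> cq_smooth a b c \<or>
      cq_DuVal b a c \<or> cq_smooth b a c \<or>
      cq_DuVal c a b \<or> cq_smooth c a b)"

definition setA :: "(nat \<times> nat \<times> nat) set" where
  "setA = {t. well_formed t \<and> has_DuVal_or_smooth_point t}"

definition setB1 :: "(nat \<times> nat \<times> nat) set" where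
  "setB1 = {(1 + 4 * l * (n - 1), 2 * n - 1 + 4 * k * (n - 1), 4 * n - 4) | n l k.
              2 \<le> n \<and> l < n - 1 \<and> k < n - 1}"

definition setB2 :: "(nat \<times> nat \<times> nat) set" where
  "setB2 = {(1 + l * (6 * n - 5), 3 * n - 1 + k * (6 * n - 5), 6 * n - 5) | n l k.
              2 \<le> n \<and> int l < \<lceil>(4 * (6 * real n - 5)) / 9\<rceil>
                    \<and> int k < \<lceil>(4 * (6 * real n - 5)) / 9\<rceil>}"

definition setB3 :: "(nat \<times> nat \<times> nat) set" where
  "setB3 = {(1 + l * (6 * n - 7), 3 * n - 2 + k * (6 * n - 7), 6 * n - 7) | n l k.
              2 \<le> n \<and> int l < \<lceil>(4 * (6 * real n - 7)) / 9\<rceil>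
                    \<and> int k < \<lceil>(4 * (6 * real n - 7)) / 9\<rceil>}"

definition perm_closure :: "(nat \<times> nat \<times> nat) set \<Rightarrow> (nat \<times> nat \<times> nat) set" where
  "perm_closure T = {(x, y, z). (x, y, z) \<in> T \<or> (x, z, y) \<in> T \<or> (y, x, z) \<in> T
                      \<or> (y, z, x) \<in> T \<or> (z, x, y) \<in> T \<or> (z, y, x) \<in> T}"

definition setS :: "(nat \<times> nat \<times> nat) set" where
  "setS = perm_closure (setA \<union> setB1 \<union> setB2 \<union> setB3)"

end

theory Submission
  imports Defs "HOL-Analysis.Harmonic_Numbers" "HOL-Real_Asymp.Real_Asymp"
begin

text \<open>After a permutation of coordinates, every triple (x, y, z) of S has its first coordinate
  determined modulo the third one by the second one: a Du Val point 1/z(x,y) means x \<equiv> -y (mod z),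
  while a smooth point x = 1, and every triple of B1, B2, B3 by construction, gives x \<equiv> 1 (mod z).
  For fixed y and z at most N/z + 1 values x \<le> N lie in a prescribed residue class, so such
  triples number at most N^2 (H_N + 1) = O(N^2 log N) in the cube [1,N]^3.\<close>

abbreviation cube :: "nat \<Rightarrow> (nat \<times> nat \<times> nat) set" where
  "cube N \<equiv> {1..N} \<times> {1..N} \<times> {1..N}"

definition prescribed_residue :: "(nat \<Rightarrow> nat \<Rightarrow> nat) \<Rightarrow> (nat \<times> nat \<times> nat) set" where
  "prescribed_residue f = {(x, y, z). x mod z = f y z}"

definition neg_residue :: "nat \<Rightarrow> nat \<Rightarrow> nat" where
  "neg_residue y z = (z - y mod z) mod z"

definition residue_forced :: "(nat \<times> nat \<times> nat) set" where
  "residue_forced = prescribed_residue neg_residue \<union> prescribed_residue (\<lambda>_ z. 1 mod z)"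

lemma harm_le_one_plus_ln: "0 < n \<Longrightarrow> harm n \<le> 1 + ln (real n)"
  using euler_mascheroni_sequence_decreasing[of 1 n] by (simp add: harm_expand)

lemma sum_div_le_harm: "(\<Sum>z=1..N. real (N div z)) \<le> real N * harm N"
proof -
  have "(\<Sum>z=1..N. real (N div z)) \<le> (\<Sum>z=1..N. real N * inverse (real z))"
    by (intro sum_mono) (simp add: of_nat_div_le_of_nat divide_inverse[symmetric])
  also have "\<dots> = real N * harm N"
    by (simp add: harm_def sum_distrib_left)
  finally show ?thesis .
qed

lemma card_prescribed_residue_cube:
  "card (prescribed_residue f \<inter> cube N) \<le> (\<Sum>z=1..N. N * (N div z + 1))"
proof -
  let ?D = "SIGMA z:{1..N}. {1..N} \<times> {0..N div z}"
  let ?g = "\<lambda>(z, y, q). (q * z + f y z, y, z)"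
  have "prescribed_residue f \<inter> cube N \<subseteq> ?g ` ?D"
  proof (clarify)
    fix x y z
    assume x: "x \<in> {1..N}" and yz: "y \<in> {1..N}" "z \<in> {1..N}"
      and "(x, y, z) \<in> prescribed_residue f"
    then have "x mod z = f y z"
      by (simp add: prescribed_residue_def)
    then have "x = (x div z) * z + f y z"
      by (metis div_mult_mod_eq)
    moreover have "x div z \<le> N div z"
      using x by (simp add: div_le_mono)
    ultimately show "(x, y, z) \<in> ?g ` ?D"
      using yz by (intro image_eqI[where x = "(z, y, x div z)"]) auto
  qed
  then have "card (prescribed_residue f \<inter> cube N) \<le> card (?g ` ?D)"
    by (rule card_mono[rotated]) auto
  also have "\<dots> \<le> card ?D"
    by (rule card_image_le) auto
  also have "\<dots> = (\<Sum>z=1..N. N * (N div z + 1))"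
    by (subst card_SigmaI) (auto simp: card_cartesian_product)
  finally show ?thesis .
qed

lemma card_prescribed_residue_cube_le:
  "real (card (prescribed_residue f \<inter> cube N)) \<le> real N ^ 2 * (2 + ln (real N))"
proof (cases "N = 0")
  case True
  then show ?thesis by simp
next
  case False
  have "real (card (prescribed_residue f \<inter> cube N)) \<le> real (\<Sum>z=1..N. N * (N div z + 1))"
    using card_prescribed_residue_cube of_nat_mono by blast
  also have "\<dots> = real N * (\<Sum>z=1..N. real (N div z)) + real N ^ 2"
    by (simp add: sum.distrib sum_distrib_left power2_eq_square algebra_simps)
  also have "\<dots> \<le> real N ^ 2 * harm N + real N ^ 2"
    using sum_div_le_harm[of N] by (simp add: power2_eq_square mult_left_mono mult.assoc)
  also have "\<dots> \<le> real N ^ 2 * (1 + ln (real N)) + real N ^ 2"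
    using harm_le_one_plus_ln[of N] False by (simp add: mult_left_mono)
  finally show ?thesis
    by (simp add: algebra_simps)
qed

lemma subset_perm_closure: "T \<subseteq> perm_closure T"
  by (auto simp: perm_closure_def)

lemma perm_closure_minimal: "T \<subseteq> perm_closure U \<Longrightarrow> perm_closure T \<subseteq> perm_closure U"
  unfolding perm_closure_def by blast

lemma card_perm_closure_cube:
  "card (perm_closure T \<inter> cube N) \<le> 6 * card (T \<inter> cube N)"
proof -
  define perms :: "(nat \<times> nat \<times> nat \<Rightarrow> nat \<times> nat \<times> nat) list" where
    "perms = [\<lambda>(x, y, z). (x, y, z), \<lambda>(x, y, z). (x, z, y), \<lambda>(x, y, z). (y, x, z),
              \<lambda>(x, y, z). (z, x, y), \<lambda>(x, y, z). (y, z, x), \<lambda>(x, y, z). (z, y, x)]"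
  have "perm_closure T \<inter> cube N \<subseteq> (\<Union>\<sigma>\<in>set perms. \<sigma> ` (T \<inter> cube N))"
    unfolding perms_def perm_closure_def by (clarsimp simp: image_iff Bex_def)
  then have "card (perm_closure T \<inter> cube N) \<le> card (\<Union>\<sigma>\<in>set perms. \<sigma> ` (T \<inter> cube N))"
    by (rule card_mono[rotated]) auto
  also have "\<dots> \<le> (\<Sum>\<sigma>\<in>set perms. card (\<sigma> ` (T \<inter> cube N)))"
    by (rule card_UN_le) simp
  also have "\<dots> \<le> (\<Sum>\<sigma>\<in>set perms. card (T \<inter> cube N))"
    by (intro sum_mono card_image_le) auto
  also have "\<dots> \<le> length perms * card (T \<inter> cube N)"
    by (simp add: card_length)
  finally show ?thesis
    by (simp add: perms_def)
qed

lemma mod_eq_neg_residue_if_dvd: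
  fixes x y z :: nat
  assumes "z dvd x + y"
  shows "x mod z = neg_residue y z"
  unfolding neg_residue_def
proof (cases "y mod z = 0")
  case True
  then have "z dvd y" by (rule mod_0_imp_dvd)
  then have "z dvd x" using assms dvd_add_left_iff by blast
  then show "x mod z = (z - y mod z) mod z" using True by simp
next
  case False
  then have "0 < z" using assms by (cases "z = 0") auto
  have "z dvd x mod z + y mod z" using assms by (simp add: mod_add_eq dvd_eq_mod_eq_0)
  then obtain k where k: "x mod z + y mod z = z * k" by (elim dvdE)
  have "0 < z * k" using k False by linarith
  moreover have "z * k < z * 2"
    using k mod_less_divisor[OF \<open>0 < z\<close>, of x] mod_less_divisor[OF \<open>0 < z\<close>, of y] by linarith
  ultimately have "k = 1" by simp
  then show "x mod z = (z - y mod z) mod z"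
    using k \<open>0 < z\<close> by (metis add_diff_cancel_right' mod_less_divisor mod_less nat_mult_1_right)
qed

lemma setA_subset_perm_closure: "setA \<subseteq> perm_closure residue_forced"
  by (auto simp: setA_def has_DuVal_or_smooth_point_def cq_DuVal_def cq_smooth_def
      perm_closure_def residue_forced_def prescribed_residue_def mod_eq_neg_residue_if_dvd)

lemma setB_subset_prescribed_residue:
  "setB1 \<union> setB2 \<union> setB3 \<subseteq> prescribed_residue (\<lambda>_ z. 1 mod z)"
proof -
  have "(1 + l * m, y, m) \<in> prescribed_residue (\<lambda>_ z. 1 mod z)" for l m y :: nat
    using mod_mult_self1[of 1 l m] by (simp add: prescribed_residue_def)
  moreover have "4 * l * (n - 1) = l * (4 * n - 4)" for l n :: nat
    by (simp add: diff_mult_distrib2)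
  ultimately show ?thesis
    unfolding setB1_def setB2_def setB3_def by (smt (verit) Un_iff mem_Collect_eq subsetI)
qed

lemma setS_subset_perm_closure: "setS \<subseteq> perm_closure residue_forced"
  unfolding setS_def
proof (rule perm_closure_minimal)
  have "setB1 \<union> setB2 \<union> setB3 \<subseteq> perm_closure residue_forced"
    using setB_subset_prescribed_residue subset_perm_closure[of residue_forced]
    unfolding residue_forced_def by blast
  then show "setA \<union> setB1 \<union> setB2 \<union> setB3 \<subseteq> perm_closure residue_forced"
    using setA_subset_perm_closure by blast
qed

lemma card_residue_forced_cube_le:
  "real (card (residue_forced \<inter> cube N)) \<le> 2 * (real N ^ 2 * (2 + ln (real N)))"
proof -
  have "card (residue_forced \<inter> cube N)
      \<le> card (prescribed_residue neg_residue \<inter> cube N)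
        + card (prescribed_residue (\<lambda>_ z. 1 mod z) \<inter> cube N)"
    unfolding residue_forced_def Int_Un_distrib2 by (rule card_Un_le)
  then show ?thesis
    using card_prescribed_residue_cube_le[of neg_residue N]
      card_prescribed_residue_cube_le[of "\<lambda>_ z. 1 mod z" N]
    by (simp add: of_nat_mono[of "card (residue_forced \<inter> cube N)"])
qed

lemma card_setS_cube_le:
  "real (card (setS \<inter> cube N)) \<le> 12 * (real N ^ 2 * (2 + ln (real N)))"
proof -
  have "card (setS \<inter> cube N) \<le> card (perm_closure residue_forced \<inter> cube N)"
    using setS_subset_perm_closure by (intro card_mono) auto
  also have "\<dots> \<le> 6 * card (residue_forced \<inter> cube N)"
    by (rule card_perm_closure_cube)
  finally have "real (card (setS \<inter> cube N)) \<le> 6 * real (card (residue_forced \<inter> cube N))"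
    by (metis of_nat_mono of_nat_mult of_nat_numeral)
  then show ?thesis
    using card_residue_forced_cube_le[of N] by simp
qed

theorem lemma4p11:
  shows "(\<lambda>N::nat. real (card (setS \<inter> ({1..N} \<times> {1..N} \<times> {1..N}))) / real N ^ 3)
           \<longlonglongrightarrow> 0"
proof (rule tendsto_sandwich[OF _ _ tendsto_const])
  show "\<forall>\<^sub>F N in sequentially. real (card (setS \<inter> cube N)) / real N ^ 3
               \<le> 12 * (real N ^ 2 * (2 + ln (real N))) / real N ^ 3"
    using card_setS_cube_le by (intro always_eventually allI divide_right_mono) auto
  show "(\<lambda>N. 12 * (real N ^ 2 * (2 + ln (real N))) / real N ^ 3) \<longlonglongrightarrow> 0"
    by real_asymp
qed simp

end
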